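(* Let ${\bm k}$ be a field of characteristic different from $2$, let $n\ge 1$, and let $\hat{A}_{n,{\bm k}}$ be the completed $n$-th Weyl algebra over ${\bm k}$. For $i=1,\dots,n$ let $$X_i = x_i + \sum_{l = 1}^n x_l\sum_{N = 1}^\infty \sum_{j = 1}^n p^{N-1,l}_{ij}(\partial^1,\ldots,\partial^n)\,\partial^j \in \hat{A}_{n,{\bm k}},$$ where, for each $N\ge 1$ and $i,j,l\in\{1,\dots,n\}$, $p^{N-1,l}_{ij}(\partial^1,\ldots,\partial^n)$ is an arbitrary homogeneous polynomial of degree $N-1$ in $\partial^1,\ldots,\partial^n$ with coefficients in ${\bm k}$, antisymmetric in the lower indices: $p^{N-1,l}_{ij}=-p^{N-1,l}_{ji}$. Then for every integer $k\ge 1$ and every function $\alpha:\{1,\ldots,k\}\to\{1,\ldots,n\}$, writing $\alpha_i=\alpha(i)$, $$\sum_{\sigma\in\Sigma(k)} X_{\alpha_{\sigma(1)}}\cdots X_{\alpha_{\sigma(k)}} \triangleright 1 = k!\,x_{\alpha_1}\cdots x_{\alpha_k},$$ where $\Sigma(k)$ is the symmetric group on $k$ letters.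
   Context: The $n$-th Weyl algebra $A_{n,{\bm k}}$ is the associative ${\bm k}$-algebra generated by $x_1,\ldots,x_n,\partial^1,\ldots,\partial^n$ subject to the relations $[x_i,x_j]=0$, $[\partial^i,\partial^j]=0$, $[\partial^j,x_i]=\delta^j_i$ (equivalently $x_i\partial^j-\partial^j x_i=-\delta_i^j$) for all $i,j$. Its completion $\hat{A}_{n,{\bm k}}$ with respect to the filtration by the degree of differential operators consists of arbitrary formal power series in $\partial^1,\ldots,\partial^n$ with coefficients (written on the left) in the commutative polynomial ring ${\bm k}[x_1,\ldots,x_n]$. The Fock action $\triangleright$ of $\hat{A}_{n,{\bm k}}$ on ${\bm k}[x_1,\ldots,x_n]$ is the one in which $x_i$ acts by multiplication by $x_i$ and $\partial^j$ acts as the partial derivative $\partial/\partial x_j$ (on a given polynomial only finitely many terms of a power series act nontrivially); $1\in{\bm k}[x_1,\ldots,x_n]$ is the vacuum. *)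

theory Defs
  imports "HOL-Library.Poly_Mapping" "HOL-Combinatorics.Permutations"
begin

text \<open>Commutative polynomials k[x_1,...,x_n]: finitely supported maps from
  monomials (exponent vectors, nat =>0 nat) to coefficients. Variable indices
  are the natural numbers 1..n as in the paper.\<close>

type_synonym 'k mpoly = "(nat \<Rightarrow>\<^sub>0 nat) \<Rightarrow>\<^sub>0 'k"

definition Var :: "nat \<Rightarrow> 'k::comm_ring_1 mpoly" where
  "Var i = Poly_Mapping.single (Poly_Mapping.single i 1) 1"

definition mdeg :: "(nat \<Rightarrow>\<^sub>0 nat) \<Rightarrow> nat" where
  "mdeg m = (\<Sum>v\<in>Poly_Mapping.keys m. Poly_Mapping.lookup m v)"

definition homogeneous_in :: "nat \<Rightarrow> nat \<Rightarrow> 'k::zero mpoly \<Rightarrow> bool" where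
  "homogeneous_in n d q \<longleftrightarrow> (\<forall>m\<in>Poly_Mapping.keys q. Poly_Mapping.keys m \<subseteq> {1..n} \<and> mdeg m = d)"

text \<open>Falling factorial coefficient: (d/dx)^m x^a = ffact a m * x^(a-m) when m \<le> a.\<close>
definition ffact :: "(nat \<Rightarrow>\<^sub>0 nat) \<Rightarrow> (nat \<Rightarrow>\<^sub>0 nat) \<Rightarrow> nat" where
  "ffact a m = (\<Prod>v\<in>Poly_Mapping.keys m. fact (Poly_Mapping.lookup a v) div fact (Poly_Mapping.lookup a v - Poly_Mapping.lookup m v))"

definition mle :: "(nat \<Rightarrow>\<^sub>0 nat) \<Rightarrow> (nat \<Rightarrow>\<^sub>0 nat) \<Rightarrow> bool" where
  "mle m a \<longleftrightarrow> (\<forall>v. Poly_Mapping.lookup m v \<le> Poly_Mapping.lookup a v)"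

text \<open>Fock action of a formal power series in the partial derivatives,
  given by its coefficient function c (coefficient of the monomial
  (\<partial>^1)^(m_1)...(\<partial>^n)^(m_n)), on a polynomial f. Only the finitely many
  terms with m \<le> a for some monomial a of f act nontrivially.\<close>
definition fps_act :: "((nat \<Rightarrow>\<^sub>0 nat) \<Rightarrow> 'k::comm_ring_1) \<Rightarrow> 'k mpoly \<Rightarrow> 'k mpoly" where
  "fps_act c f = (\<Sum>a\<in>Poly_Mapping.keys f. \<Sum>m\<in>{m. mle m a}.
      Poly_Mapping.single (a - m) (c m * Poly_Mapping.lookup f a * of_nat (ffact a m)))"

definition pderiv_var :: "nat \<Rightarrow> 'k::comm_ring_1 mpoly \<Rightarrow> 'k mpoly" where
  "pderiv_var j f = fps_act (\<lambda>m. if m = Poly_Mapping.single j 1 then 1 else 0) f"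

text \<open>The formal power series \<Sum>_{d\<ge>0} P d, whose homogeneous degree-d part is P d.\<close>
definition series_of :: "(nat \<Rightarrow> 'k::zero mpoly) \<Rightarrow> ((nat \<Rightarrow>\<^sub>0 nat) \<Rightarrow> 'k)" where
  "series_of P m = Poly_Mapping.lookup (P (mdeg m)) m"

text \<open>Fock action of
  X_i = x_i + \<Sum>_{l=1..n} x_l \<Sum>_{N\<ge>1} \<Sum>_{j=1..n} p^{N-1,l}_{ij}(\<partial>) \<partial>^j,
  where p d l i j is the polynomial p^{d,l}_{ij} (so d = N-1).\<close>
definition X_act :: "nat \<Rightarrow> (nat \<Rightarrow> nat \<Rightarrow> nat \<Rightarrow> nat \<Rightarrow> 'k::comm_ring_1 mpoly)
    \<Rightarrow> nat \<Rightarrow> 'k mpoly \<Rightarrow> 'k mpoly" where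
  "X_act n p i f = Var i * f +
     (\<Sum>l\<in>{1..n}. Var l * (\<Sum>j\<in>{1..n}.
        fps_act (series_of (\<lambda>d. p d l i j)) (pderiv_var j f)))"

text \<open>Action of the product X_{b_1} ... X_{b_r} on f (rightmost factor acts first).\<close>
definition Xprod_act :: "nat \<Rightarrow> (nat \<Rightarrow> nat \<Rightarrow> nat \<Rightarrow> nat \<Rightarrow> 'k::comm_ring_1 mpoly)
    \<Rightarrow> nat list \<Rightarrow> 'k mpoly \<Rightarrow> 'k mpoly" where
  "Xprod_act n p bs f = foldr (X_act n p) bs f"

end

theory Submission
  imports Defs "HOL-Combinatorics.Multiset_Permutations"
begin

text \<open>Splitting off the first factor, the symmetrised product reduces by induction on k to
  the identity \<Sum>_t X_{\<alpha> t} \<Prod>_{s \<noteq> t} x_{\<alpha> s} = k \<Prod>_s x_{\<alpha> s}.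
  The leading terms x_{\<alpha> t} of the X_{\<alpha> t} give k copies of the monomial. After
  differentiating, the correction terms become a sum over ordered pairs t \<noteq> u of
  p^l_{\<alpha> t, \<alpha> u}(\<partial>) \<Prod>_{s \<noteq> t, u} x_{\<alpha> s}, which by antisymmetry of p equals its own
  negative and hence vanishes since 2 \<noteq> 0.\<close>

lemma fps_act_eq_sum_superset:
  assumes "finite S" "Poly_Mapping.keys f \<subseteq> S"
  shows "fps_act c f = (\<Sum>a\<in>S. \<Sum>m\<in>{m. mle m a}.
           Poly_Mapping.single (a - m) (c m * Poly_Mapping.lookup f a * of_nat (ffact a m)))"
  unfolding fps_act_def
  by (rule sum.mono_neutral_left) (use assms in \<open>auto simp: in_keys_iff\<close>)

lemma fps_act_single:
  "fps_act c (Poly_Mapping.single a r) =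
     (\<Sum>m\<in>{m. mle m a}. Poly_Mapping.single (a - m) (c m * r * of_nat (ffact a m)))"
  by (subst fps_act_eq_sum_superset[where S = "{a}"]) auto

lemma fps_act_add: "fps_act c (f + g) = fps_act c f + fps_act c g"
proof -
  let ?S = "Poly_Mapping.keys f \<union> Poly_Mapping.keys g"
  have keys: "Poly_Mapping.keys (f + g) \<subseteq> ?S"
    by (rule keys_add)
  show ?thesis
    by (simp add: fps_act_eq_sum_superset[OF _ keys] fps_act_eq_sum_superset[of ?S f]
        fps_act_eq_sum_superset[of ?S g] lookup_add distrib_left distrib_right
        single_add sum.distrib)
qed

lemma fps_act_zero [simp]: "fps_act c 0 = 0"
  by (simp add: fps_act_def)

lemma fps_act_sum: "fps_act c (\<Sum>x\<in>A. g x) = (\<Sum>x\<in>A. fps_act c (g x))"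
  by (induction A rule: infinite_finite_induct) (auto simp: fps_act_add)

lemma fps_act_uminus_coeffs: "fps_act (\<lambda>m. - c m) f = - fps_act c f"
  by (simp add: fps_act_def single_uminus sum_negf)

lemma finite_mle: "finite {m. mle m a}"
proof -
  let ?h = "\<lambda>m. restrict (Poly_Mapping.lookup m) (Poly_Mapping.keys a)"
  have "inj_on ?h {m. mle m a}"
  proof (rule inj_onI)
    fix m m' assume "m \<in> {m. mle m a}" "m' \<in> {m. mle m a}" "?h m = ?h m'"
    then show "m = m'"
      by (intro poly_mapping_eqI)
        (metis (mono_tags, lifting) le_zero_eq mem_Collect_eq mle_def
          not_in_keys_iff_lookup_eq_zero restrict_apply')
  qed
  moreover have "?h ` {m. mle m a} \<subseteq> PiE (Poly_Mapping.keys a) (\<lambda>v. {0..Poly_Mapping.lookup a v})"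
    by (auto simp: mle_def)
  moreover have "finite (PiE (Poly_Mapping.keys a) (\<lambda>v. {0..Poly_Mapping.lookup a v}))"
    by (intro finite_PiE) auto
  ultimately show ?thesis
    using finite_imageD finite_subset by metis
qed

lemma pderiv_var_single:
  "pderiv_var j (Poly_Mapping.single a r) =
     Poly_Mapping.single (a - Poly_Mapping.single j 1) (r * of_nat (Poly_Mapping.lookup a j))"
proof -
  let ?e = "Poly_Mapping.single j (1::nat)"
  have "pderiv_var j (Poly_Mapping.single a r) =
      (\<Sum>m\<in>{m. mle m a}. if m = ?e then Poly_Mapping.single (a - m) (r * of_nat (ffact a m)) else 0)"
    unfolding pderiv_var_def fps_act_single by (rule sum.cong) auto
  also have "\<dots> = (if mle ?e a then Poly_Mapping.single (a - ?e) (r * of_nat (ffact a ?e)) else 0)"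
    by (simp add: finite_mle)
  also have "\<dots> = Poly_Mapping.single (a - ?e) (r * of_nat (Poly_Mapping.lookup a j))"
  proof (cases "mle ?e a")
    case True
    then have "Poly_Mapping.lookup a j \<ge> 1"
      unfolding mle_def by (metis lookup_single_eq)
    then have "ffact a ?e = Poly_Mapping.lookup a j"
      unfolding ffact_def by (simp add: fact_div_fact)
    with True show ?thesis by simp
  next
    case False
    then have "Poly_Mapping.lookup a j = 0"
      unfolding mle_def by (auto simp: lookup_single when_def split: if_splits)
    with False show ?thesis by simp
  qed
  finally show ?thesis .
qed

definition prod_exponent :: "('a \<Rightarrow> nat) \<Rightarrow> 'a set \<Rightarrow> (nat \<Rightarrow>\<^sub>0 nat)" where
  "prod_exponent \<alpha> B = (\<Sum>s\<in>B. Poly_Mapping.single (\<alpha> s) 1)"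

lemma prod_Var_eq_single:
  "finite B \<Longrightarrow> (\<Prod>s\<in>B. Var (\<alpha> s) :: 'k::comm_ring_1 mpoly) = Poly_Mapping.single (prod_exponent \<alpha> B) 1"
  by (induction B rule: finite_induct) (auto simp: prod_exponent_def Var_def mult_single)

lemma lookup_prod_exponent:
  "finite B \<Longrightarrow> Poly_Mapping.lookup (prod_exponent \<alpha> B) j = card {u\<in>B. \<alpha> u = j}"
  by (simp add: prod_exponent_def lookup_sum lookup_single when_def sum.If_cases) (simp add: Int_def)

lemma prod_exponent_remove:
  "finite B \<Longrightarrow> u \<in> B \<Longrightarrow> prod_exponent \<alpha> B - Poly_Mapping.single (\<alpha> u) 1 = prod_exponent \<alpha> (B - {u})"
  unfolding prod_exponent_def by (simp add: sum.remove)

lemma pderiv_var_prod_Var: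
  assumes "finite B"
  shows "pderiv_var j (\<Prod>s\<in>B. Var (\<alpha> s) :: 'k::comm_ring_1 mpoly) =
         (\<Sum>u\<in>{u\<in>B. \<alpha> u = j}. \<Prod>s\<in>B - {u}. Var (\<alpha> s))"
proof -
  let ?x = "prod_exponent \<alpha> B - Poly_Mapping.single j 1"
  have "(\<Sum>u\<in>{u\<in>B. \<alpha> u = j}. \<Prod>s\<in>B - {u}. Var (\<alpha> s) :: 'k mpoly)
      = (\<Sum>u\<in>{u\<in>B. \<alpha> u = j}. Poly_Mapping.single ?x 1)"
    using assms by (intro sum.cong) (auto simp: prod_Var_eq_single prod_exponent_remove[symmetric])
  also have "\<dots> = Poly_Mapping.single ?x (of_nat (card {u\<in>B. \<alpha> u = j}))"
    by (simp add: mult_single flip: single_of_nat)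
  finally show ?thesis
    using assms by (simp add: prod_Var_eq_single pderiv_var_single lookup_prod_exponent)
qed

lemma sum_fps_act_pderiv_var_prod_Var:
  assumes "finite B" "finite J" and "\<And>u. u \<in> B \<Longrightarrow> \<alpha> u \<in> J"
  shows "(\<Sum>j\<in>J. fps_act (c j) (pderiv_var j (\<Prod>s\<in>B. Var (\<alpha> s) :: 'k::comm_ring_1 mpoly))) =
         (\<Sum>u\<in>B. fps_act (c (\<alpha> u)) (\<Prod>s\<in>B - {u}. Var (\<alpha> s)))"
proof -
  have "(\<Sum>j\<in>J. fps_act (c j) (pderiv_var j (\<Prod>s\<in>B. Var (\<alpha> s) :: 'k mpoly))) =
        (\<Sum>j\<in>J. \<Sum>u\<in>{u\<in>B. \<alpha> u = j}. fps_act (c (\<alpha> u)) (\<Prod>s\<in>B - {u}. Var (\<alpha> s)))"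
    using assms(1) by (intro sum.cong) (auto simp: pderiv_var_prod_Var fps_act_sum)
  also have "\<dots> = (\<Sum>u\<in>B. fps_act (c (\<alpha> u)) (\<Prod>s\<in>B - {u}. Var (\<alpha> s)))"
    by (rule sum.group) (use assms in auto)
  finally show ?thesis .
qed

lemma sum_offdiag_antisym_eq_uminus:
  fixes G :: "'a \<Rightarrow> 'a \<Rightarrow> 'b::ab_group_add"
  assumes "finite A" and "\<And>t u. t \<in> A \<Longrightarrow> u \<in> A \<Longrightarrow> G t u = - G u t"
  shows "(\<Sum>t\<in>A. \<Sum>u\<in>A - {t}. G t u) = - (\<Sum>t\<in>A. \<Sum>u\<in>A - {t}. G t u)"
proof -
  have "(\<Sum>t\<in>A. \<Sum>u\<in>A - {t}. G t u) = (\<Sum>t\<in>A. \<Sum>u\<in>{u\<in>A. t \<noteq> u}. G t u)"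
    by (intro sum.cong) auto
  also have "\<dots> = (\<Sum>u\<in>A. \<Sum>t\<in>{t\<in>A. t \<noteq> u}. G t u)"
    by (rule sum.swap_restrict) (use assms(1) in auto)
  also have "\<dots> = (\<Sum>u\<in>A. \<Sum>t\<in>A - {u}. - G u t)"
    by (intro sum.cong assms(2)) auto
  also have "\<dots> = - (\<Sum>t\<in>A. \<Sum>u\<in>A - {t}. G t u)"
    by (simp only: sum_negf)
  finally show ?thesis .
qed

lemma mpoly_eq_uminus_imp_zero:
  fixes f :: "'k::idom mpoly"
  assumes "(2::'k) \<noteq> 0" and "f = - f"
  shows "f = 0"
proof (rule poly_mapping_eqI)
  fix m
  have "Poly_Mapping.lookup f m = - Poly_Mapping.lookup f m"
    using arg_cong[OF assms(2), of "\<lambda>q. Poly_Mapping.lookup q m"] by (simp only: lookup_uminus)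
  then have "2 * Poly_Mapping.lookup f m = 0"
    by (metis eq_neg_iff_add_eq_0 mult_2)
  then show "Poly_Mapping.lookup f m = Poly_Mapping.lookup 0 m"
    using assms(1) by simp
qed

lemma pderiv_var_add: "pderiv_var j (f + g) = pderiv_var j f + pderiv_var j g"
  by (simp add: pderiv_var_def fps_act_add)

lemma X_act_add: "X_act n p i (f + g) = X_act n p i f + X_act n p i g"
  by (simp add: X_act_def pderiv_var_add fps_act_add distrib_left sum.distrib add_ac)

lemma X_act_zero [simp]: "X_act n p i 0 = 0"
  by (simp add: X_act_def pderiv_var_def)

lemma X_act_sum: "X_act n p i (\<Sum>x\<in>A. g x) = (\<Sum>x\<in>A. X_act n p i (g x))"
  by (induction A rule: infinite_finite_induct) (auto simp: X_act_add)

lemma X_act_of_nat_mult: "X_act n p i (of_nat r * f) = of_nat r * X_act n p i f"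
  by (induction r) (auto simp: X_act_add distrib_right)

lemma sum_correction_prod_Var_eq_0:
  fixes p :: "nat \<Rightarrow> nat \<Rightarrow> nat \<Rightarrow> nat \<Rightarrow> 'k::idom mpoly"
  assumes char: "(2::'k) \<noteq> 0"
    and antisym: "\<And>d i j. i \<in> {1..n} \<Longrightarrow> j \<in> {1..n} \<Longrightarrow> p d l i j = - p d l j i"
    and A: "finite A" and \<alpha>: "\<And>t. t \<in> A \<Longrightarrow> \<alpha> t \<in> {1..n}"
  shows "(\<Sum>t\<in>A. \<Sum>j\<in>{1..n}. fps_act (series_of (\<lambda>d. p d l (\<alpha> t) j))
            (pderiv_var j (\<Prod>s\<in>A - {t}. Var (\<alpha> s)))) = 0"
proof -
  define G where
    "G t u = fps_act (series_of (\<lambda>d. p d l (\<alpha> t) (\<alpha> u))) (\<Prod>s\<in>A - {t} - {u}. Var (\<alpha> s))" for t u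
  have "G t u = - G u t" if "t \<in> A" "u \<in> A" for t u
  proof -
    have "series_of (\<lambda>d. p d l (\<alpha> t) (\<alpha> u)) = (\<lambda>m. - series_of (\<lambda>d. p d l (\<alpha> u) (\<alpha> t)) m)"
      using antisym[OF \<alpha>[OF that(1)] \<alpha>[OF that(2)]] by (simp add: series_of_def fun_eq_iff)
    moreover have "A - {t} - {u} = A - {u} - {t}" by auto
    ultimately show ?thesis
      unfolding G_def by (simp add: fps_act_uminus_coeffs)
  qed
  then have "(\<Sum>t\<in>A. \<Sum>u\<in>A - {t}. G t u) = 0"
    by (intro mpoly_eq_uminus_imp_zero char sum_offdiag_antisym_eq_uminus A)
  moreover have "(\<Sum>j\<in>{1..n}. fps_act (series_of (\<lambda>d. p d l (\<alpha> t) j))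
      (pderiv_var j (\<Prod>s\<in>A - {t}. Var (\<alpha> s)))) = (\<Sum>u\<in>A - {t}. G t u)" for t
    unfolding G_def by (rule sum_fps_act_pderiv_var_prod_Var) (use A \<alpha> in auto)
  ultimately show ?thesis
    by simp
qed

lemma sum_X_act_prod_Var_remove:
  fixes p :: "nat \<Rightarrow> nat \<Rightarrow> nat \<Rightarrow> nat \<Rightarrow> 'k::idom mpoly"
  assumes char: "(2::'k) \<noteq> 0"
    and antisym: "\<And>d l i j. l \<in> {1..n} \<Longrightarrow> i \<in> {1..n} \<Longrightarrow> j \<in> {1..n} \<Longrightarrow> p d l i j = - p d l j i"
    and A: "finite A" and \<alpha>: "\<And>t. t \<in> A \<Longrightarrow> \<alpha> t \<in> {1..n}"
  shows "(\<Sum>t\<in>A. X_act n p (\<alpha> t) (\<Prod>s\<in>A - {t}. Var (\<alpha> s))) =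
         of_nat (card A) * (\<Prod>s\<in>A. Var (\<alpha> s))"
proof -
  define C where "C l t = (\<Sum>j\<in>{1..n}. fps_act (series_of (\<lambda>d. p d l (\<alpha> t) j))
    (pderiv_var j (\<Prod>s\<in>A - {t}. Var (\<alpha> s))))" for l t
  have "X_act n p (\<alpha> t) (\<Prod>s\<in>A - {t}. Var (\<alpha> s)) =
      (\<Prod>s\<in>A. Var (\<alpha> s)) + (\<Sum>l\<in>{1..n}. Var l * C l t)" if "t \<in> A" for t
    unfolding X_act_def C_def using A that by (simp add: prod.remove)
  then have leading: "(\<Sum>t\<in>A. X_act n p (\<alpha> t) (\<Prod>s\<in>A - {t}. Var (\<alpha> s))) =
      of_nat (card A) * (\<Prod>s\<in>A. Var (\<alpha> s)) + (\<Sum>t\<in>A. \<Sum>l\<in>{1..n}. Var l * C l t)"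
    by (simp add: sum.distrib)
  have "(\<Sum>t\<in>A. C l t) = 0" if "l \<in> {1..n}" for l
    unfolding C_def
    by (rule sum_correction_prod_Var_eq_0[where p = p and l = l, OF char antisym[OF that] A \<alpha>])
  moreover have "(\<Sum>t\<in>A. \<Sum>l\<in>{1..n}. Var l * C l t) = (\<Sum>l\<in>{1..n}. Var l * (\<Sum>t\<in>A. C l t))"
    unfolding sum_distrib_left by (rule sum.swap)
  ultimately have correction: "(\<Sum>t\<in>A. \<Sum>l\<in>{1..n}. Var l * C l t) = 0"
    by simp
  show ?thesis
    by (simp only: leading correction add_0_right)
qed

lemma sum_permutations_of_set_nonempty:
  assumes "finite A" "A \<noteq> {}"
  shows "(\<Sum>xs\<in>permutations_of_set A. F xs) =
         (\<Sum>x\<in>A. \<Sum>ys\<in>permutations_of_set (A - {x}). F (x # ys))"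
proof -
  have "(\<Sum>xs\<in>permutations_of_set A. F xs) =
        (\<Sum>x\<in>A. \<Sum>xs\<in>(\<lambda>xs. x # xs) ` permutations_of_set (A - {x}). F xs)"
    unfolding permutations_of_set_nonempty[OF assms(2)]
    by (rule sum.UNION_disjoint) (use assms in auto)
  also have "\<dots> = (\<Sum>x\<in>A. \<Sum>ys\<in>permutations_of_set (A - {x}). F (x # ys))"
    by (rule sum.cong[OF refl], subst sum.reindex) (auto simp: inj_on_def)
  finally show ?thesis .
qed

lemma bij_betw_map_permutes:
  assumes "distinct xs"
  shows "bij_betw (\<lambda>\<sigma>. map \<sigma> xs) {\<sigma>. \<sigma> permutes set xs} (permutations_of_set (set xs))"
proof -
  let ?P = "{\<sigma>. \<sigma> permutes set xs}"
  have inj: "inj_on (\<lambda>\<sigma>. map \<sigma> xs) ?P"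
  proof (rule inj_onI)
    fix \<sigma> \<tau> assume "\<sigma> \<in> ?P" "\<tau> \<in> ?P" "map \<sigma> xs = map \<tau> xs"
    then show "\<sigma> = \<tau>"
      by (metis ext map_eq_conv mem_Collect_eq permutes_not_in)
  qed
  have image: "(\<lambda>\<sigma>. map \<sigma> xs) ` ?P \<subseteq> permutations_of_set (set xs)"
    using assms by (auto intro!: permutations_of_setI simp: permutes_image distinct_map permutes_inj_on)
  have "card ((\<lambda>\<sigma>. map \<sigma> xs) ` ?P) = card (permutations_of_set (set xs))"
    using assms by (simp add: card_image[OF inj] card_permutations)
  with inj image show ?thesis
    unfolding bij_betw_def by (simp add: card_subset_eq)
qed

lemma sum_permutations_Xprod_act:
  fixes p :: "nat \<Rightarrow> nat \<Rightarrow> nat \<Rightarrow> nat \<Rightarrow> 'k::idom mpoly"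
  assumes char: "(2::'k) \<noteq> 0"
    and antisym: "\<And>d l i j. l \<in> {1..n} \<Longrightarrow> i \<in> {1..n} \<Longrightarrow> j \<in> {1..n} \<Longrightarrow> p d l i j = - p d l j i"
    and "finite A" and "\<And>t. t \<in> A \<Longrightarrow> \<alpha> t \<in> {1..n}"
  shows "(\<Sum>xs\<in>permutations_of_set A. Xprod_act n p (map \<alpha> xs) 1) =
         of_nat (fact (card A)) * (\<Prod>s\<in>A. Var (\<alpha> s))"
  using assms(3,4)
proof (induction "card A" arbitrary: A)
  case 0
  then show ?case
    by (simp add: Xprod_act_def)
next
  case (Suc m)
  then have "A \<noteq> {}"
    by auto
  then have "(\<Sum>xs\<in>permutations_of_set A. Xprod_act n p (map \<alpha> xs) 1)
     = (\<Sum>x\<in>A. \<Sum>ys\<in>permutations_of_set (A - {x}). X_act n p (\<alpha> x) (Xprod_act n p (map \<alpha> ys) 1))"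
    by (simp add: sum_permutations_of_set_nonempty Suc.prems Xprod_act_def)
  also have "\<dots> = (\<Sum>x\<in>A. X_act n p (\<alpha> x) (of_nat (fact m) * (\<Prod>s\<in>A - {x}. Var (\<alpha> s))))"
  proof (rule sum.cong[OF refl])
    fix x
    assume "x \<in> A"
    then have "card (A - {x}) = m"
      using Suc by simp
    moreover have "(\<Sum>ys\<in>permutations_of_set (A - {x}). Xprod_act n p (map \<alpha> ys) 1) =
       of_nat (fact (card (A - {x}))) * (\<Prod>s\<in>A - {x}. Var (\<alpha> s))"
      by (rule Suc.hyps(1)) (use Suc \<open>card (A - {x}) = m\<close> in auto)
    ultimately show "(\<Sum>ys\<in>permutations_of_set (A - {x}). X_act n p (\<alpha> x) (Xprod_act n p (map \<alpha> ys) 1)) =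
      X_act n p (\<alpha> x) (of_nat (fact m) * (\<Prod>s\<in>A - {x}. Var (\<alpha> s)))"
      by (simp flip: X_act_sum)
  qed
  also have "\<dots> = of_nat (fact m) * (\<Sum>x\<in>A. X_act n p (\<alpha> x) (\<Prod>s\<in>A - {x}. Var (\<alpha> s)))"
    by (simp add: X_act_of_nat_mult sum_distrib_left)
  also have "\<dots> = of_nat (fact m) * (of_nat (card A) * (\<Prod>s\<in>A. Var (\<alpha> s)))"
    using sum_X_act_prod_Var_remove[where p = p and \<alpha> = \<alpha>, OF char antisym Suc.prems] by simp
  also have "\<dots> = of_nat (fact (card A)) * (\<Prod>s\<in>A. Var (\<alpha> s))"
    using Suc.hyps(2)[symmetric] by (simp add: algebra_simps)
  finally show ?case .
qed

theorem theorem2p1: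
  fixes n k :: nat
    and p :: "nat \<Rightarrow> nat \<Rightarrow> nat \<Rightarrow> nat \<Rightarrow> 'f::field mpoly"
    and \<alpha> :: "nat \<Rightarrow> nat"
  assumes char: "(2::'f) \<noteq> 0"
    and n: "n \<ge> 1"
    and hom: "\<And>d l i j. l \<in> {1..n} \<Longrightarrow> i \<in> {1..n} \<Longrightarrow> j \<in> {1..n} \<Longrightarrow>
               homogeneous_in n d (p d l i j)"
    and antisym: "\<And>d l i j. l \<in> {1..n} \<Longrightarrow> i \<in> {1..n} \<Longrightarrow> j \<in> {1..n} \<Longrightarrow>
               p d l i j = - p d l j i"
    and k: "k \<ge> 1"
    and \<alpha>: "\<And>t. t \<in> {1..k} \<Longrightarrow> \<alpha> t \<in> {1..n}"
  shows "(\<Sum>\<sigma>\<in>{\<sigma>. \<sigma> permutes {1..k}}.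
            Xprod_act n p (map (\<lambda>t. \<alpha> (\<sigma> t)) [1..<k+1]) 1)
         = of_nat (fact k) * (\<Prod>t\<in>{1..k}. Var (\<alpha> t))"
proof -
  have "set [1..<k+1] = {1..k}"
    by auto
  then have "(\<Sum>\<sigma>\<in>{\<sigma>. \<sigma> permutes {1..k}}. Xprod_act n p (map (\<lambda>t. \<alpha> (\<sigma> t)) [1..<k+1]) 1)
      = (\<Sum>xs\<in>permutations_of_set {1..k}. Xprod_act n p (map \<alpha> xs) 1)"
    using sum.reindex_bij_betw[OF bij_betw_map_permutes[OF distinct_upt[of 1 "k+1"]],
        where g = "\<lambda>xs. Xprod_act n p (map \<alpha> xs) 1"]
    by (simp only: map_map comp_def)
  also have "\<dots> = of_nat (fact k) * (\<Prod>t\<in>{1..k}. Var (\<alpha> t))"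
    using sum_permutations_Xprod_act[where p = p and \<alpha> = \<alpha>, OF char antisym finite_atLeastAtMost \<alpha>]
    by simp
  finally show ?thesis .
qed

end
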